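(* Let $T\subset\mathbb{R}^3$ be a nondegenerate tetrahedron with vertices $\mathbf v_1,\dots,\mathbf v_4$ and faces $F_j$ opposite $\mathbf v_j$; let $\mathcal I_j(p)=\frac1{|F_j|}\int_{F_j}p\,d\mathbf x$, $j=1,\dots,4$. For $1\le i<j\le4$ let $x_{ij}(t)=(1-t)\mathbf v_i+t\mathbf v_j$, $t\in[0,1]$, let $\omega_{ij}$ be a probability density on $[0,1]$, and let $q_{ij}$ be a polynomial of degree at most 2 on $[0,1]$ with $\int_0^1 q_{ij}(t)\phi(t)\omega_{ij}(t)\,dt=0$ for every affine $\phi$. Define $\mathcal L_{ij}(p)=\int_0^1p(x_{ij}(t))\,q_{ij}(t)\,\omega_{ij}(t)\,dt$ for $p\in\mathbb{P}_2(T)$, and $\Sigma^{\mathrm{ef}}=\{\mathcal I_j:j=1,\dots,4\}\cup\{\mathcal L_{ij}:1\le i<j\le4\}$. Then the triple $(T,\mathbb{P}_2(T),\Sigma^{\mathrm{ef}})$ is unisolvent if and only if $\int_0^1t(1-t)\,q_{ij}(t)\,\omega_{ij}(t)\,dt\ne0$ for all $1\le i<j\le4$.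
   Context: $|F_j|$ is the area of $F_j$; $\mathbb{P}_2(T)$ is the space of polynomials of degree at most 2 on $T$. Unisolvent means the only $p\in\mathbb{P}_2(T)$ annihilated by all ten functionals of $\Sigma^{\mathrm{ef}}$ is $p=0$. *)

theory Defs
  imports "HOL-Analysis.Analysis" "HOL-Computational_Algebra.Polynomial"
begin

definition P2 :: "(real^3 \<Rightarrow> real) set" where
  "P2 = {p. \<exists>c (b::real^3) (A::real^3^3).
            \<forall>x. p x = c + (\<Sum>k\<in>UNIV. b$k * x$k) + (\<Sum>k\<in>UNIV. \<Sum>l\<in>UNIV. A$k$l * x$k * x$l)}"

definition ref_triangle :: "(real^2) set" where
  "ref_triangle = {y. 0 \<le> y$1 \<and> 0 \<le> y$2 \<and> y$1 + y$2 \<le> 1}"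

text \<open>Mean value of p over the triangle with vertices a b c:
  (1/|F|) \<integral>_F p, computed via the affine parametrization (the Jacobian factor
  cancels against the area, leaving 2 = 1/|ref_triangle|).\<close>
definition triangle_mean :: "(real^3 \<Rightarrow> real) \<Rightarrow> real^3 \<Rightarrow> real^3 \<Rightarrow> real^3 \<Rightarrow> real" where
  "triangle_mean p a b c =
     2 * integral ref_triangle (\<lambda>y. p (a + (y$1) *\<^sub>R (b - a) + (y$2) *\<^sub>R (c - a)))"

definition face_mean :: "(nat \<Rightarrow> real^3) \<Rightarrow> nat \<Rightarrow> (real^3 \<Rightarrow> real) \<Rightarrow> real" where
  "face_mean v j p =
     (let ids = sorted_list_of_set ({1..4::nat} - {j})
      in triangle_mean p (v (ids!0)) (v (ids!1)) (v (ids!2)))"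

definition edge_fun :: "(nat \<Rightarrow> real^3) \<Rightarrow> (real \<Rightarrow> real) \<Rightarrow> real poly \<Rightarrow> nat \<Rightarrow> nat
                         \<Rightarrow> (real^3 \<Rightarrow> real) \<Rightarrow> real" where
  "edge_fun v \<omega> q i j p =
     integral {0..1} (\<lambda>t. p ((1 - t) *\<^sub>R v i + t *\<^sub>R v j) * poly q t * \<omega> t)"

definition unisolvent_ef ::
  "(nat \<Rightarrow> real^3) \<Rightarrow> (nat \<Rightarrow> nat \<Rightarrow> real \<Rightarrow> real) \<Rightarrow> (nat \<Rightarrow> nat \<Rightarrow> real poly) \<Rightarrow> bool" where
  "unisolvent_ef v \<omega> q \<longleftrightarrow>
     (\<forall>p\<in>P2.
        (\<forall>j\<in>{1..4}. face_mean v j p = 0) \<and>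
        (\<forall>i j. 1 \<le> i \<and> i < j \<and> j \<le> 4 \<longrightarrow> edge_fun v (\<omega> i j) (q i j) i j p = 0)
        \<longrightarrow> (\<forall>x\<in>convex hull (v ` {1..4}). p x = 0))"

end

theory Submission
  imports Defs
begin

text \<open>
  On the edge from \<open>v m\<close> to \<open>v n\<close>, a quadratic \<open>p x = c + b \<bullet> x + x \<bullet> (A *v x)\<close> is the
  affine interpolant of its endpoint values minus \<open>d t (1 - t)\<close>, where
  \<open>d = (v n - v m) \<bullet> (A *v (v n - v m))\<close>. As \<open>q m n\<close> is orthogonal to affine functions, the
  edge functional of \<open>p\<close> is \<open>-d\<close> times the bubble moment \<open>\<integral> t (1 - t) q \<omega>\<close>. If all bubble
  moments are nonzero, the edge conditions force \<open>d = 0\<close> on every edge, so \<open>p\<close> is the affine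
  interpolant of its vertex values; the face means are then proportional to the sums of the
  vertex values over the faces, and these four sums vanish only if all vertex values do.
  If the bubble moment of the edge \<open>(i, j)\<close> vanishes, the product of the barycentric coordinates
  \<open>lam i * lam j\<close>, corrected by an affine function cancelling its face means, is annihilated by
  all ten functionals without vanishing on the tetrahedron.
\<close>

section \<open>Integrals over the reference triangle\<close>

lemma continuous_on_compact_imp_absolutely_integrable_on:
  fixes f :: "'a::euclidean_space \<Rightarrow> 'b::euclidean_space"
  assumes "compact S" "continuous_on S f"
  shows "f absolutely_integrable_on S"
proof -
  have "integrable lborel (\<lambda>x. indicator S x *\<^sub>R f x)"
    using borel_integrable_compact[OF assms] .
  moreover have "(\<lambda>x. indicator S x *\<^sub>R f x) \<in> borel_measurable lborel"
    using assms by (auto intro!: borel_measurable_continuous_on_indicator borel_compact)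
  ultimately show ?thesis
    unfolding set_integrable_def by (simp add: integrable_completion)
qed

lemma integral_invariant_under_involution:
  fixes g L :: "real^'n::{finite,wellorder} \<Rightarrow> real^'n::_" and f :: "real^'n::_ \<Rightarrow> real"
  assumes "compact S" "continuous_on S f"
    and "\<And>x. (g has_derivative L) (at x)" "\<bar>det (matrix L)\<bar> = 1"
    and "\<And>x. x \<in> S \<Longrightarrow> g (g x) = x" "g ` S = S"
  shows "integral S (\<lambda>x. f (g x)) = integral S f"
proof -
  define F where "F x = f x *\<^sub>R (axis 1 1 :: real^1)" for x
  have "continuous_on S g"
    using assms(3) has_derivative_continuous continuous_at_imp_continuous_on by blast
  moreover have F_int: "F absolutely_integrable_on S"
    unfolding F_def using assms(1,2)
    by (intro continuous_on_compact_imp_absolutely_integrable_on continuous_intros)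
  ultimately have "(\<lambda>x. F (g x)) absolutely_integrable_on S \<and> integral S (\<lambda>x. F (g x)) = integral S F"
    using has_absolute_integral_change_of_variables_invertible[of S g "\<lambda>_. L" g F "integral S F"]
      assms(3-6) has_derivative_at_withinI by (auto intro: has_derivative_subset)
  then have "integral S (\<lambda>x. F (g x) \<bullet> axis 1 1) = integral S (\<lambda>x. F x \<bullet> axis 1 1)"
    using integral_component_eq set_lebesgue_integral_eq_integral(1) F_int by metis
  then show ?thesis by (simp add: F_def inner_axis_axis)
qed

lemma compact_ref_triangle: "compact ref_triangle"
proof -
  have "ref_triangle \<subseteq> cbox 0 1"
    by (auto simp: ref_triangle_def mem_box_cart forall_2)
  moreover have "closed ref_triangle"
    unfolding ref_triangle_def by (intro closed_Collect_conj closed_Collect_le continuous_intros)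
  ultimately show ?thesis
    by (meson bounded_cbox bounded_subset compact_eq_bounded_closed)
qed

lemma continuous_on_imp_integrable_on_ref_triangle:
  "continuous_on ref_triangle f \<Longrightarrow> (f :: real^2 \<Rightarrow> real) integrable_on ref_triangle"
  using continuous_on_compact_imp_absolutely_integrable_on[OF compact_ref_triangle]
    set_lebesgue_integral_eq_integral(1) by blast

definition coord_swap :: "real^2 \<Rightarrow> real^2" where
  "coord_swap x = (\<chi> i. if i = 1 then x$2 else x$1)"

definition triangle_flip_linear :: "real^2 \<Rightarrow> real^2" where
  "triangle_flip_linear x = (\<chi> i. if i = 1 then - x$1 - x$2 else x$2)"

definition triangle_flip :: "real^2 \<Rightarrow> real^2" where
  "triangle_flip x = axis 1 1 + triangle_flip_linear x"

lemma coord_swap_has_derivative: "(coord_swap has_derivative coord_swap) (at x)"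
  by (intro linear_imp_has_derivative linearI) (auto simp: coord_swap_def vec_eq_iff)

lemma triangle_flip_has_derivative: "(triangle_flip has_derivative triangle_flip_linear) (at x)"
proof -
  have "linear triangle_flip_linear"
    by (rule linearI) (auto simp: triangle_flip_linear_def vec_eq_iff algebra_simps)
  then have "((\<lambda>x. axis 1 1 + triangle_flip_linear x) has_derivative (\<lambda>h. 0 + triangle_flip_linear h)) (at x)"
    by (intro has_derivative_add has_derivative_const linear_imp_has_derivative)
  then show ?thesis by (simp add: triangle_flip_def[abs_def])
qed

lemma abs_det_coord_swap: "\<bar>det (matrix coord_swap)\<bar> = 1"
  by (simp add: det_2 matrix_def coord_swap_def axis_def)

lemma abs_det_triangle_flip_linear: "\<bar>det (matrix triangle_flip_linear)\<bar> = 1"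
  by (simp add: det_2 matrix_def triangle_flip_linear_def axis_def)

lemma coord_swap_involution: "coord_swap (coord_swap x) = x"
  by (simp add: coord_swap_def vec_eq_iff forall_2)

lemma triangle_flip_involution: "triangle_flip (triangle_flip x) = x"
  by (simp add: triangle_flip_def triangle_flip_linear_def axis_def vec_eq_iff forall_2)

lemma involution_image_eq:
  assumes "\<And>x. g (g x) = x" "g ` S \<subseteq> S"
  shows "g ` S = S"
proof
  show "S \<subseteq> g ` S"
  proof
    fix x assume "x \<in> S"
    then show "x \<in> g ` S" using assms by (metis image_eqI subsetD)
  qed
qed (use assms in simp)

lemma coord_swap_ref_triangle: "coord_swap ` ref_triangle = ref_triangle"
  by (rule involution_image_eq[OF coord_swap_involution])
    (auto simp: coord_swap_def ref_triangle_def)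

lemma triangle_flip_ref_triangle: "triangle_flip ` ref_triangle = ref_triangle"
  by (rule involution_image_eq[OF triangle_flip_involution])
    (auto simp: triangle_flip_def triangle_flip_linear_def axis_def ref_triangle_def)

text \<open>The area is \<open>1/2\<close>, but only its positivity is needed.\<close>
definition ref_triangle_area :: real where
  "ref_triangle_area = integral ref_triangle (\<lambda>_. 1)"

lemma ref_triangle_area_pos: "ref_triangle_area > 0"
proof -
  let ?Q = "cbox 0 (vec (1/2)) :: (real^2) set"
  have "?Q \<subseteq> ref_triangle"
  proof
    fix x assume "x \<in> ?Q"
    then have "0 \<le> x$1" "x$1 \<le> 1/2" "0 \<le> x$2" "x$2 \<le> 1/2"
      unfolding mem_box_cart by auto
    then show "x \<in> ref_triangle"
      by (simp add: ref_triangle_def)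
  qed
  then have "integral ?Q (\<lambda>_. 1::real) \<le> ref_triangle_area"
    unfolding ref_triangle_area_def
    by (intro integral_subset_le integrable_const continuous_on_imp_integrable_on_ref_triangle
        continuous_on_const) auto
  moreover have "?Q \<noteq> {}"
    unfolding box_ne_empty by (simp add: Basis_vec_def cart_eq_inner_axis[symmetric])
  then have "integral ?Q (\<lambda>_. 1::real) = 1/4"
    by (simp add: content_cbox_cart power2_eq_square)
  ultimately show ?thesis by simp
qed

lemma integral_ref_triangle_affine_function:
  "integral ref_triangle (\<lambda>y. u + y$1 * a + y$2 * b)
     = u * ref_triangle_area + a * integral ref_triangle (\<lambda>y. y$1)
       + b * integral ref_triangle (\<lambda>y. y$2)"
proof -
  have "((\<lambda>y. u * 1 + y$1 * a + y$2 * b) has_integral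
      u * ref_triangle_area + integral ref_triangle (\<lambda>y. y$1) * a
      + integral ref_triangle (\<lambda>y. y$2) * b) ref_triangle"
    unfolding ref_triangle_area_def
    by (intro has_integral_add has_integral_mult_right has_integral_mult_left integrable_integral
        continuous_on_imp_integrable_on_ref_triangle continuous_intros)
  then show ?thesis
    by (simp add: integral_unique mult.commute)
qed

text \<open>Both involutions preserve the integral; the swap exchanges the two coordinates and the
  flip turns \<open>y$1\<close> into \<open>1 - y$1 - y$2\<close>.\<close>
lemma integral_ref_triangle_coordinate:
  "integral ref_triangle (\<lambda>y. y$1) = ref_triangle_area / 3"
  "integral ref_triangle (\<lambda>y. y$2) = ref_triangle_area / 3"
proof -
  have cont: "continuous_on ref_triangle (\<lambda>y::real^2. y$1)"
    by (intro continuous_intros)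
  have "integral ref_triangle (\<lambda>y. coord_swap y $ 1) = integral ref_triangle (\<lambda>y. y$1)"
    by (rule integral_invariant_under_involution[OF compact_ref_triangle cont
          coord_swap_has_derivative abs_det_coord_swap coord_swap_involution coord_swap_ref_triangle])
  then have swap: "integral ref_triangle (\<lambda>y. y$2) = integral ref_triangle (\<lambda>y. y$1)"
    by (simp add: coord_swap_def)
  have "integral ref_triangle (\<lambda>y. triangle_flip y $ 1) = integral ref_triangle (\<lambda>y. y$1)"
    by (rule integral_invariant_under_involution[OF compact_ref_triangle cont
          triangle_flip_has_derivative abs_det_triangle_flip_linear triangle_flip_involution
          triangle_flip_ref_triangle])
  moreover have "triangle_flip y $ 1 = 1 + y$1 * (-1) + y$2 * (-1)" for y
    by (simp add: triangle_flip_def triangle_flip_linear_def)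
  ultimately show "integral ref_triangle (\<lambda>y. y$1) = ref_triangle_area / 3"
    "integral ref_triangle (\<lambda>y. y$2) = ref_triangle_area / 3"
    using swap integral_ref_triangle_affine_function[of 1 "-1" "-1"] by simp_all
qed

lemma integral_ref_triangle_affine:
  "integral ref_triangle (\<lambda>y. u + y$1 * a + y$2 * b) = ref_triangle_area / 3 * (3 * u + a + b)"
  unfolding integral_ref_triangle_affine_function integral_ref_triangle_coordinate
  by (simp add: algebra_simps)

section \<open>Quadratic functions\<close>

definition quadratic :: "real \<Rightarrow> real^'n \<Rightarrow> real^'n^'n \<Rightarrow> real^'n \<Rightarrow> real" where
  "quadratic c b A x = c + b \<bullet> x + x \<bullet> (A *v x)"

lemma P2_iff_quadratic: "p \<in> P2 \<longleftrightarrow> (\<exists>c b A. p = quadratic c b A)"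
proof -
  have "(\<Sum>k\<in>UNIV. b$k * x$k) = b \<bullet> x" for b x :: "real^3"
    by (simp add: inner_vec_def)
  moreover have "(\<Sum>k\<in>UNIV. \<Sum>l\<in>UNIV. A$k$l * x$k * x$l) = x \<bullet> (A *v x)" for A :: "real^3^3" and x
    by (simp add: inner_vec_def matrix_vector_mult_def sum_distrib_left mult_ac)
  ultimately show ?thesis
    unfolding P2_def quadratic_def fun_eq_iff by simp
qed

lemma quadratic_segment:
  "quadratic c b A ((1 - t) *\<^sub>R y + t *\<^sub>R z)
     = (1 - t) * quadratic c b A y + t * quadratic c b A z - t * (1 - t) * ((z - y) \<bullet> (A *v (z - y)))"
  by (simp add: quadratic_def algebra_simps)

lemma quadratic_convex_combination:
  fixes w :: "'i \<Rightarrow> real^'n"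
  assumes "finite I" "sum l I = 1"
  shows "quadratic c b A (\<Sum>i\<in>I. l i *\<^sub>R w i)
     = (\<Sum>i\<in>I. l i * quadratic c b A (w i))
       - (\<Sum>i\<in>I. \<Sum>j\<in>I. l i * l j * ((w i - w j) \<bullet> (A *v (w i - w j)))) / 2"
proof -
  define x where "x = (\<Sum>i\<in>I. l i *\<^sub>R w i)"
  define B where "B y z = y \<bullet> (A *v z)" for y z
  have diag: "(\<Sum>i\<in>I. \<Sum>j\<in>I. l i * l j * B (w i) (w i)) = (\<Sum>i\<in>I. l i * B (w i) (w i))"
    using assms(2) by (simp add: sum_distrib_left[symmetric] sum_distrib_right[symmetric] mult_ac)
  have cross: "(\<Sum>i\<in>I. \<Sum>j\<in>I. l i * l j * B (w i) (w j)) = B x x"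
    by (simp add: B_def x_def inner_sum_left inner_sum_right matrix_vector_mult_scaleR
        vec.sum sum_distrib_left mult_ac) (subst sum.swap, simp add: mult_ac)
  have "(\<Sum>i\<in>I. \<Sum>j\<in>I. l i * l j * ((w i - w j) \<bullet> (A *v (w i - w j))))
      = (\<Sum>i\<in>I. \<Sum>j\<in>I. l i * l j * B (w i) (w i)) + (\<Sum>j\<in>I. \<Sum>i\<in>I. l i * l j * B (w j) (w j))
        - (\<Sum>i\<in>I. \<Sum>j\<in>I. l i * l j * B (w i) (w j)) - (\<Sum>j\<in>I. \<Sum>i\<in>I. l i * l j * B (w j) (w i))"
    by (subst (2 4) sum.swap)
      (simp add: B_def sum.distrib sum_subtractf algebra_simps)
  also have "\<dots> = 2 * (\<Sum>i\<in>I. l i * B (w i) (w i)) - 2 * B x x"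
    using diag cross by (simp add: mult.commute)
  finally have "(\<Sum>i\<in>I. \<Sum>j\<in>I. l i * l j * ((w i - w j) \<bullet> (A *v (w i - w j)))) / 2
      = (\<Sum>i\<in>I. l i * B (w i) (w i)) - B x x"
    by simp
  moreover have "(\<Sum>i\<in>I. l i * quadratic c b A (w i))
      = c + b \<bullet> x + (\<Sum>i\<in>I. l i * B (w i) (w i))"
    using assms(2) by (simp add: quadratic_def B_def x_def distrib_left sum.distrib
        sum_distrib_right[symmetric] inner_sum_right)
  ultimately show ?thesis
    unfolding quadratic_def B_def x_def by linarith
qed

lemma quadratic_eq_barycentric_sum:
  fixes w :: "'i \<Rightarrow> real^'n"
  assumes "finite I" "\<And>y. (\<Sum>k\<in>I. lam k y) = 1" "\<And>y. (\<Sum>k\<in>I. lam k y *\<^sub>R w k) = y"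
    and "\<And>i j. i \<in> I \<Longrightarrow> j \<in> I \<Longrightarrow> (w i - w j) \<bullet> (A *v (w i - w j)) = 0"
  shows "quadratic c b A y = (\<Sum>k\<in>I. lam k y * quadratic c b A (w k))"
  using quadratic_convex_combination[of I "\<lambda>k. lam k y" c b A w] by (simp add: assms)

lemma quadratic_form_outer_product:
  fixes e f x :: "real^'n"
  shows "x \<bullet> ((\<chi> k l. e$k * f$l) *v x) = (e \<bullet> x) * (f \<bullet> x)"
  by (simp add: inner_vec_def matrix_vector_mult_def sum_product sum_distrib_left mult_ac)
    (subst sum.swap, simp add: mult_ac)

section \<open>Edge functionals\<close>

lemma integrable_on_continuous_mult_density:
  fixes w g :: "real \<Rightarrow> real"
  assumes "w integrable_on {0..1}" "\<And>t. t \<in> {0..1} \<Longrightarrow> 0 \<le> w t" "continuous_on {0..1} g"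
  shows "(\<lambda>t. g t * w t) integrable_on {0..1}"
proof -
  have "w absolutely_integrable_on {0..1}"
    by (rule nonnegative_absolutely_integrable_1[OF assms(1,2)])
  moreover have "g \<in> borel_measurable (lebesgue_on {0..1})"
    by (rule continuous_imp_measurable_on_sets_lebesgue[OF assms(3)]) simp
  moreover have "bounded (g ` {0..1})"
    by (rule compact_imp_bounded[OF compact_continuous_image[OF assms(3)]]) simp
  ultimately have "(\<lambda>t. g t * w t) absolutely_integrable_on {0..1}"
    by (intro absolutely_integrable_bounded_measurable_product_real) auto
  then show ?thesis
    using set_lebesgue_integral_eq_integral(1) by blast
qed

lemma integral_orthogonal_plus_bubble:
  fixes w :: "real \<Rightarrow> real" and Q :: "real poly"
  assumes "w integrable_on {0..1}" "\<And>t. t \<in> {0..1} \<Longrightarrow> 0 \<le> w t"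
    and orth: "\<And>a b. integral {0..1} (\<lambda>t. poly Q t * (a + b * t) * w t) = 0"
  shows "integral {0..1} (\<lambda>t. (a + b * t + \<beta> * (t * (1 - t))) * poly Q t * w t)
           = \<beta> * integral {0..1} (\<lambda>t. t * (1 - t) * poly Q t * w t)"
proof -
  have int: "(\<lambda>t. (poly Q t * (a + b * t)) * w t) integrable_on {0..1}"
    "(\<lambda>t. (t * (1 - t) * poly Q t) * w t) integrable_on {0..1}"
    by (rule integrable_on_continuous_mult_density[OF assms(1,2)]; auto intro!: continuous_intros)+
  have "integral {0..1} (\<lambda>t. (a + b * t + \<beta> * (t * (1 - t))) * poly Q t * w t)
      = integral {0..1} (\<lambda>t. (poly Q t * (a + b * t)) * w t + \<beta> * ((t * (1 - t) * poly Q t) * w t))"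
    by (simp add: algebra_simps)
  also have "\<dots> = integral {0..1} (\<lambda>t. poly Q t * (a + b * t) * w t)
      + \<beta> * integral {0..1} (\<lambda>t. t * (1 - t) * poly Q t * w t)"
    using int by (simp add: integral_add integrable_on_mult_right)
  finally show ?thesis
    using orth by simp
qed

definition bubble_moment :: "(real \<Rightarrow> real) \<Rightarrow> real poly \<Rightarrow> real" where
  "bubble_moment \<omega> Q = integral {0..1} (\<lambda>t. t * (1 - t) * poly Q t * \<omega> t)"

lemma edge_fun_quadratic:
  assumes "\<omega> integrable_on {0..1}" "\<And>t. t \<in> {0..1} \<Longrightarrow> 0 \<le> \<omega> t"
    and "\<And>a b. integral {0..1} (\<lambda>t. poly Q t * (a + b * t) * \<omega> t) = 0"
  shows "edge_fun v \<omega> Q i j (quadratic c b A)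
           = - ((v j - v i) \<bullet> (A *v (v j - v i))) * bubble_moment \<omega> Q"
proof -
  let ?f = "quadratic c b A"
  have "?f ((1 - t) *\<^sub>R v i + t *\<^sub>R v j)
      = ?f (v i) + (?f (v j) - ?f (v i)) * t + - ((v j - v i) \<bullet> (A *v (v j - v i))) * (t * (1 - t))" for t
    unfolding quadratic_segment by (simp add: algebra_simps)
  then show ?thesis
    unfolding edge_fun_def bubble_moment_def using integral_orthogonal_plus_bubble[OF assms]
    by presburger
qed

section \<open>Barycentric coordinates and face means\<close>

definition edge_matrix :: "(nat \<Rightarrow> real^3) \<Rightarrow> real^3^3" where
  "edge_matrix v = (\<chi> r c. (if c = 1 then v 2 - v 1 else if c = 2 then v 3 - v 1 else v 4 - v 1) $ r)"

lemma edge_matrix_mult: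
  "edge_matrix v *v y = y$1 *\<^sub>R (v 2 - v 1) + y$2 *\<^sub>R (v 3 - v 1) + y$3 *\<^sub>R (v 4 - v 1)"
  by (simp add: edge_matrix_def matrix_vector_mult_def vec_eq_iff sum_3 algebra_simps)

lemma edge_matrix_left_invertible:
  fixes v :: "nat \<Rightarrow> real^3"
  assumes "inj_on v {1..4}" "\<not> affine_dependent (v ` {1..4})"
  obtains B where "B ** edge_matrix v = mat 1" "edge_matrix v ** B = mat 1"
proof -
  have four: "{1..4::nat} = {1, 2, 3, 4}"
    by auto
  have distinct: "v 1 \<noteq> v 2" "v 1 \<noteq> v 3" "v 1 \<noteq> v 4" "v 2 \<noteq> v 3" "v 2 \<noteq> v 4" "v 3 \<noteq> v 4"
    using assms(1) unfolding inj_on_def four by simp_all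
  have "y = 0" if "edge_matrix v *v y = 0" for y
  proof (rule ccontr)
    assume "y \<noteq> 0"
    then obtain c where c: "y $ c \<noteq> 0"
      by (auto simp: vec_eq_iff)
    define U where "U p = (if p = v 1 then - (y$1 + y$2 + y$3) else if p = v 2 then y$1
      else if p = v 3 then y$2 else y$3)" for p
    have "(\<Sum>p\<in>v ` {1..4}. U p *\<^sub>R p) = edge_matrix v *v y"
      unfolding four edge_matrix_mult using distinct by (simp add: U_def algebra_simps)
    moreover have "sum U (v ` {1..4}) = 0" "\<exists>p\<in>v ` {1..4}. U p \<noteq> 0"
      unfolding four using distinct c exhaust_3[of c] by (auto simp: U_def)
    ultimately have "affine_dependent (v ` {1..4})"
      unfolding affine_dependent_explicit_finite[OF finite_imageI[OF finite_atLeastAtMost]]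
      using that by (intro exI[of _ U]) simp
    then show False
      using assms(2) by simp
  qed
  then show ?thesis
    using that matrix_left_invertible_ker matrix_left_right_inverse by metis
qed

lemma tetrahedron_barycentric_coordinates:
  fixes v :: "nat \<Rightarrow> real^3"
  assumes "inj_on v {1..4}" "\<not> affine_dependent (v ` {1..4})"
  obtains lam :: "nat \<Rightarrow> real^3 \<Rightarrow> real" and D :: "nat \<Rightarrow> real" and E :: "nat \<Rightarrow> real^3" where
    "\<And>k y. lam k y = D k + E k \<bullet> y"
    "\<And>k m. k \<in> {1..4} \<Longrightarrow> m \<in> {1..4} \<Longrightarrow> lam k (v m) = (if k = m then 1 else 0)"
    "\<And>y. (\<Sum>k\<in>{1..4}. lam k y) = 1"
    "\<And>y. (\<Sum>k\<in>{1..4}. lam k y *\<^sub>R v k) = y"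
proof -
  let ?M = "edge_matrix v"
  obtain B where BM: "B ** ?M = mat 1" and MB: "?M ** B = mat 1"
    using edge_matrix_left_invertible[OF assms] by blast
  define E where "E k = (if k = 1 then - (B$1 + B$2 + B$3) else if k = 2 then B$1
    else if k = 3 then B$2 else B$3)" for k :: nat
  define D where "D k = (if k = 1 then 1 else 0) - E k \<bullet> v 1" for k :: nat
  define lam where "lam k y = D k + E k \<bullet> y" for k y
  have four: "{1..4::nat} = {1, 2, 3, 4}"
    by auto
  have lam_eq: "lam k y = (if k = 1 then 1 else 0) + E k \<bullet> (y - v 1)" for k y
    by (simp add: lam_def D_def inner_diff_right)
  have B_row: "B$i \<bullet> (?M *v axis c 1) = (if i = c then 1 else 0)" for i c
  proof -
    have "B$i \<bullet> (?M *v axis c 1) = (B *v (?M *v axis c 1)) $ i"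
      by (simp add: matrix_vector_mul_component)
    also have "\<dots> = axis c 1 $ i"
      by (simp add: matrix_vector_mul_assoc BM)
    finally show ?thesis
      by (simp add: axis_def)
  qed
  have vertex: "v 2 - v 1 = ?M *v axis 1 1" "v 3 - v 1 = ?M *v axis 2 1" "v 4 - v 1 = ?M *v axis 3 1"
    by (simp_all add: edge_matrix_mult axis_def)
  have "lam k (v m) = (if k = m then 1 else 0)" if "k \<in> {1..4}" "m \<in> {1..4}" for k m
    using that unfolding four lam_eq
    by (auto simp: vertex vertex[unfolded One_nat_def] B_row E_def inner_diff_left inner_minus_left)
  moreover have "(\<Sum>k\<in>{1..4}. lam k y) = 1" for y
    unfolding four lam_eq by (simp add: E_def inner_diff_left inner_minus_left)
  moreover have "(\<Sum>k\<in>{1..4}. lam k y *\<^sub>R v k) = y" for y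
  proof -
    have "?M *v (B *v (y - v 1)) = y - v 1"
      by (simp add: matrix_vector_mul_assoc MB)
    then have "(B$1 \<bullet> (y - v 1)) *\<^sub>R (v 2 - v 1) + (B$2 \<bullet> (y - v 1)) *\<^sub>R (v 3 - v 1)
        + (B$3 \<bullet> (y - v 1)) *\<^sub>R (v 4 - v 1) = y - v 1"
      by (simp add: edge_matrix_mult matrix_vector_mul_component)
    then show ?thesis
      unfolding four lam_eq by (simp add: E_def inner_add_left algebra_simps)
  qed
  ultimately show ?thesis
    using that[of lam D E] lam_def by blast
qed

lemma triangle_mean_affine:
  assumes "\<And>x. f x = d + e \<bullet> x"
  shows "triangle_mean f a b c = 2 * ref_triangle_area / 3 * (f a + f b + f c)"
proof -
  have eq: "(\<lambda>y::real^2. f (a + y$1 *\<^sub>R (b - a) + y$2 *\<^sub>R (c - a)))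
      = (\<lambda>y. f a + y$1 * (f b - f a) + y$2 * (f c - f a))"
    by (simp add: fun_eq_iff assms inner_add_right inner_diff_right algebra_simps)
  show ?thesis
    unfolding triangle_mean_def eq integral_ref_triangle_affine by simp
qed

lemma triangle_mean_add:
  fixes f g :: "real^3 \<Rightarrow> real"
  assumes "continuous_on UNIV f" "continuous_on UNIV g"
  shows "triangle_mean (\<lambda>x. f x + g x) a b c = triangle_mean f a b c + triangle_mean g a b c"
proof -
  have "(\<lambda>y. h (a + y$1 *\<^sub>R (b - a) + y$2 *\<^sub>R (c - a))) integrable_on ref_triangle"
    if "continuous_on UNIV h" for h :: "real^3 \<Rightarrow> real"
    by (intro continuous_on_imp_integrable_on_ref_triangle continuous_on_compose2[OF that]
        continuous_intros) auto
  then show ?thesis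
    unfolding triangle_mean_def using assms by (simp add: integral_add distrib_left)
qed

lemma face_indices:
  "{1..4::nat} - {1} = {2, 3, 4}" "{1..4::nat} - {2} = {1, 3, 4}"
  "{1..4::nat} - {3} = {1, 2, 4}" "{1..4::nat} - {4} = {1, 2, 3}"
  by auto

lemma face_mean_eq_triangle_mean:
  "face_mean v 1 p = triangle_mean p (v 2) (v 3) (v 4)"
  "face_mean v 2 p = triangle_mean p (v 1) (v 3) (v 4)"
  "face_mean v 3 p = triangle_mean p (v 1) (v 2) (v 4)"
  "face_mean v 4 p = triangle_mean p (v 1) (v 2) (v 3)"
  using face_indices by (simp_all add: face_mean_def)

lemma face_mean_affine:
  assumes "\<And>x. f x = d + e \<bullet> x" "k \<in> {1..4}"
  shows "face_mean v k f = 2 * ref_triangle_area / 3 * (\<Sum>m\<in>{1..4} - {k}. f (v m))"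
proof -
  have "k = 1 \<or> k = 2 \<or> k = 3 \<or> k = 4"
    using assms(2) by auto
  then show ?thesis
    using face_indices face_mean_eq_triangle_mean[of v f]
    by (elim disjE) (simp_all add: triangle_mean_affine[OF assms(1)] algebra_simps)
qed

lemma face_mean_add:
  fixes f g :: "real^3 \<Rightarrow> real"
  assumes "continuous_on UNIV f" "continuous_on UNIV g"
  shows "face_mean v k (\<lambda>x. f x + g x) = face_mean v k f + face_mean v k g"
  unfolding face_mean_def Let_def by (rule triangle_mean_add[OF assms])

lemma face_sums_eq_zero_imp_zero:
  fixes P :: "nat \<Rightarrow> real"
  assumes "\<And>k. k \<in> {1..4} \<Longrightarrow> (\<Sum>m\<in>{1..4} - {k}. P m) = 0" "k \<in> {1..4}"
  shows "P k = 0"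
proof -
  have "P 2 + P 3 + P 4 = 0" "P 1 + P 3 + P 4 = 0" "P 1 + P 2 + P 4 = 0" "P 1 + P 2 + P 3 = 0"
    using face_indices assms(1)[of 1] assms(1)[of 2] assms(1)[of 3] assms(1)[of 4] by simp_all
  then have "P 1 = 0" "P 2 = 0" "P 3 = 0" "P 4 = 0"
    by linarith+
  moreover have "k = 1 \<or> k = 2 \<or> k = 3 \<or> k = 4"
    using assms(2) by auto
  ultimately show ?thesis
    by auto
qed

lemma face_sums_solution:
  fixes s :: "nat \<Rightarrow> real"
  assumes "k \<in> {1..4}"
  shows "(\<Sum>m\<in>{1..4} - {k}. (\<Sum>l\<in>{1..4}. s l) / 3 - s m) = s k"
proof -
  have "(\<Sum>m\<in>{1..4} - {k}. (\<Sum>l\<in>{1..4}. s l) / 3 - s m)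
      = (\<Sum>m\<in>{1..4}. (\<Sum>l\<in>{1..4}. s l) / 3 - s m) - ((\<Sum>l\<in>{1..4}. s l) / 3 - s k)"
    using assms by (simp add: sum_diff1)
  also have "\<dots> = s k"
    by (simp add: sum_subtractf)
  finally show ?thesis .
qed

locale ef_tetrahedron =
  fixes v :: "nat \<Rightarrow> real^3" and \<omega> :: "nat \<Rightarrow> nat \<Rightarrow> real \<Rightarrow> real" and q :: "nat \<Rightarrow> nat \<Rightarrow> real poly"
    and lam :: "nat \<Rightarrow> real^3 \<Rightarrow> real" and D :: "nat \<Rightarrow> real" and E :: "nat \<Rightarrow> real^3"
  assumes lam_affine: "\<And>k y. lam k y = D k + E k \<bullet> y"
    and lam_vertex: "\<And>k m. k \<in> {1..4} \<Longrightarrow> m \<in> {1..4} \<Longrightarrow> lam k (v m) = (if k = m then 1 else 0)"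
    and lam_sum: "\<And>y. (\<Sum>k\<in>{1..4}. lam k y) = 1"
    and lam_combination: "\<And>y. (\<Sum>k\<in>{1..4}. lam k y *\<^sub>R v k) = y"
    and weight_nonneg: "\<And>i j t. 1 \<le> i \<Longrightarrow> i < j \<Longrightarrow> j \<le> 4 \<Longrightarrow> t \<in> {0..1} \<Longrightarrow> 0 \<le> \<omega> i j t"
    and weight_integrable: "\<And>i j. 1 \<le> i \<Longrightarrow> i < j \<Longrightarrow> j \<le> 4 \<Longrightarrow> \<omega> i j integrable_on {0..1}"
    and orthogonal: "\<And>i j a b. 1 \<le> i \<Longrightarrow> i < j \<Longrightarrow> j \<le> 4 \<Longrightarrow>
      integral {0..1} (\<lambda>t. poly (q i j) t * (a + b * t) * \<omega> i j t) = 0"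
begin

definition interpolant :: "(nat \<Rightarrow> real) \<Rightarrow> real^3 \<Rightarrow> real" where
  "interpolant a y = (\<Sum>m\<in>{1..4}. a m * lam m y)"

lemma interpolant_vertex:
  assumes "m \<in> {1..4}"
  shows "interpolant a (v m) = a m"
proof -
  have "interpolant a (v m) = (\<Sum>k\<in>{1..4}. if k = m then a k else 0)"
    unfolding interpolant_def by (rule sum.cong) (simp_all add: lam_vertex[OF _ assms])
  then show ?thesis
    using assms by simp
qed

lemma interpolant_affine:
  "interpolant a y = (\<Sum>m\<in>{1..4}. a m * D m) + (\<Sum>m\<in>{1..4}. a m *\<^sub>R E m) \<bullet> y"
  by (simp add: interpolant_def lam_affine inner_sum_left distrib_left sum.distrib)

lemma continuous_on_interpolant: "continuous_on UNIV (interpolant a)"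
  unfolding interpolant_affine[abs_def] by (intro continuous_intros)

lemma face_mean_interpolant:
  assumes "k \<in> {1..4}"
  shows "face_mean v k (interpolant a) = 2 * ref_triangle_area / 3 * (\<Sum>m\<in>{1..4} - {k}. a m)"
proof -
  have "face_mean v k (interpolant a)
      = 2 * ref_triangle_area / 3 * (\<Sum>m\<in>{1..4} - {k}. interpolant a (v m))"
    by (rule face_mean_affine[OF interpolant_affine assms])
  also have "(\<Sum>m\<in>{1..4} - {k}. interpolant a (v m)) = (\<Sum>m\<in>{1..4} - {k}. a m)"
    by (rule sum.cong[OF refl], rule interpolant_vertex) simp
  finally show ?thesis .
qed

lemma quadratic_eq_interpolant_of_vertex_values:
  assumes "\<And>m n. 1 \<le> m \<Longrightarrow> m < n \<Longrightarrow> n \<le> 4 \<Longrightarrow> (v n - v m) \<bullet> (A *v (v n - v m)) = 0"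
  shows "quadratic c b A = interpolant (\<lambda>k. quadratic c b A (v k))"
proof -
  have swap: "(v m - v n) \<bullet> (A *v (v m - v n)) = (v n - v m) \<bullet> (A *v (v n - v m))" for m n
    by (simp add: algebra_simps)
  have flat: "(v m - v n) \<bullet> (A *v (v m - v n)) = 0" if "m \<in> {1..4}" "n \<in> {1..4}" for m n
    using that assms[of m n] assms[of n m] swap[of m n] by (cases m n rule: linorder_cases) auto
  have "quadratic c b A y = interpolant (\<lambda>k. quadratic c b A (v k)) y" for y
    using quadratic_eq_barycentric_sum[OF finite_atLeastAtMost lam_sum lam_combination flat,
        where c = c and b = b and y = y]
    by (simp add: interpolant_def mult.commute)
  then show ?thesis ..
qed

lemma edge_fun_quadratic_edge:
  assumes "1 \<le> m" "m < n" "n \<le> 4"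
  shows "edge_fun v (\<omega> m n) (q m n) m n (quadratic c b A)
           = - ((v n - v m) \<bullet> (A *v (v n - v m))) * bubble_moment (\<omega> m n) (q m n)"
  using assms by (intro edge_fun_quadratic weight_integrable weight_nonneg orthogonal)

lemma unisolvent_if_bubble_moments_nonzero:
  assumes nonzero: "\<And>i j. 1 \<le> i \<Longrightarrow> i < j \<Longrightarrow> j \<le> 4 \<Longrightarrow> bubble_moment (\<omega> i j) (q i j) \<noteq> 0"
  shows "unisolvent_ef v \<omega> q"
  unfolding unisolvent_ef_def
proof (intro ballI impI)
  fix p x
  assume "p \<in> P2" and vanish: "(\<forall>k\<in>{1..4}. face_mean v k p = 0) \<and>
    (\<forall>i j. 1 \<le> i \<and> i < j \<and> j \<le> 4 \<longrightarrow> edge_fun v (\<omega> i j) (q i j) i j p = 0)"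
  obtain c b A where p: "p = quadratic c b A"
    using \<open>p \<in> P2\<close> P2_iff_quadratic by blast
  define P where "P m = p (v m)" for m
  have "(v n - v m) \<bullet> (A *v (v n - v m)) = 0" if "1 \<le> m" "m < n" "n \<le> 4" for m n
    using vanish nonzero[OF that] edge_fun_quadratic_edge[OF that, of c b A] that unfolding p by auto
  then have interpolation: "p = interpolant P"
    unfolding p P_def by (rule quadratic_eq_interpolant_of_vertex_values)
  have "(\<Sum>m\<in>{1..4} - {k}. P m) = 0" if "k \<in> {1..4}" for k
    using vanish that ref_triangle_area_pos face_mean_interpolant[OF that, of P]
    unfolding interpolation by simp
  then have "P k = 0" if "k \<in> {1..4}" for k
    using face_sums_eq_zero_imp_zero that by blast
  then show "p x = 0"
    unfolding interpolation interpolant_def by simp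
qed

lemma bubble_plus_interpolant_quadratic:
  "(\<lambda>y. lam i y * lam j y + interpolant a y)
     = quadratic (D i * D j + (\<Sum>m\<in>{1..4}. a m * D m))
         (D i *\<^sub>R E j + D j *\<^sub>R E i + (\<Sum>m\<in>{1..4}. a m *\<^sub>R E m)) (\<chi> k l. E i $ k * E j $ l)"
  unfolding fun_eq_iff interpolant_affine
  by (simp add: quadratic_def quadratic_form_outer_product lam_affine algebra_simps)

lemma edge_fun_bubble_plus_interpolant:
  assumes "1 \<le> i" "i < j" "j \<le> 4" "1 \<le> m" "m < n" "n \<le> 4"
  shows "edge_fun v (\<omega> m n) (q m n) m n (\<lambda>y. lam i y * lam j y + interpolant a y)
           = (if m = i \<and> n = j then bubble_moment (\<omega> i j) (q i j) else 0)"
proof -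
  have "(v n - v m) \<bullet> ((\<chi> k l. E i $ k * E j $ l) *v (v n - v m))
      = (lam i (v n) - lam i (v m)) * (lam j (v n) - lam j (v m))"
    by (simp add: quadratic_form_outer_product lam_affine inner_diff_right)
  also have "\<dots> = (if m = i \<and> n = j then -1 else 0)"
    using assms by (simp add: lam_vertex)
  finally show ?thesis
    unfolding bubble_plus_interpolant_quadratic edge_fun_quadratic_edge[OF assms(4-6)] by simp
qed

lemma bubble_plus_interpolant_nonzero_in_hull:
  assumes "i \<in> {1..4}" "j \<in> {1..4}" "i \<noteq> j"
  shows "\<exists>x\<in>convex hull (v ` {1..4}). lam i x * lam j x + interpolant a x \<noteq> 0"
proof (cases "\<exists>m\<in>{1..4}. a m \<noteq> 0")
  case True
  then obtain m where m: "m \<in> {1..4}" "a m \<noteq> 0"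
    by blast
  then have "lam i (v m) * lam j (v m) + interpolant a (v m) \<noteq> 0"
    unfolding interpolant_vertex[OF m(1)] using assms by (simp add: lam_vertex)
  then show ?thesis
    using m(1) by (intro bexI[of _ "v m"] hull_inc imageI)
next
  case False
  define x where "x = (1/2) *\<^sub>R v i + (1/2) *\<^sub>R v j"
  have midpoint: "lam k x = (lam k (v i) + lam k (v j)) / 2" for k
    by (simp add: x_def lam_affine inner_add_right algebra_simps)
  have half: "lam i x = 1/2" "lam j x = 1/2"
    unfolding midpoint using assms by (simp_all add: lam_vertex)
  have zero: "interpolant a x = 0"
    using False by (simp add: interpolant_def)
  have "lam i x * lam j x + interpolant a x = 1/4"
    unfolding half zero by simp
  moreover have "x \<in> convex hull (v ` {1..4})"
    unfolding x_def using assms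
    by (intro convexD[OF convex_convex_hull] hull_inc imageI) auto
  ultimately show ?thesis
    by (intro bexI[of _ x]) simp_all
qed

lemma not_unisolvent_if_bubble_moment_zero:
  assumes ij: "1 \<le> i" "i < j" "j \<le> 4" and zero: "bubble_moment (\<omega> i j) (q i j) = 0"
  shows "\<not> unisolvent_ef v \<omega> q"
proof -
  define \<phi> where "\<phi> y = lam i y * lam j y" for y
  define s where "s k = - 3 * face_mean v k \<phi> / (2 * ref_triangle_area)" for k
  define a where "a m = (\<Sum>l\<in>{1..4}. s l) / 3 - s m" for m
  define p where "p y = \<phi> y + interpolant a y" for y
  have "p \<in> P2"
    unfolding P2_iff_quadratic p_def \<phi>_def bubble_plus_interpolant_quadratic by blast
  moreover have "face_mean v k p = 0" if "k \<in> {1..4}" for k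
  proof -
    have "continuous_on UNIV \<phi>"
      unfolding \<phi>_def lam_affine by (intro continuous_intros)
    then have "face_mean v k p = face_mean v k \<phi> + face_mean v k (interpolant a)"
      unfolding p_def by (intro face_mean_add continuous_on_interpolant)
    also have "face_mean v k (interpolant a) = 2 * ref_triangle_area / 3 * s k"
      unfolding face_mean_interpolant[OF that] a_def face_sums_solution[OF that] ..
    finally show ?thesis
      using ref_triangle_area_pos by (simp add: s_def)
  qed
  moreover have "edge_fun v (\<omega> m n) (q m n) m n p = 0" if "1 \<le> m" "m < n" "n \<le> 4" for m n
    using edge_fun_bubble_plus_interpolant[OF ij that, of a] zero unfolding p_def \<phi>_def by auto
  moreover have "\<exists>x\<in>convex hull (v ` {1..4}). p x \<noteq> 0"
    unfolding p_def \<phi>_def using ij by (intro bubble_plus_interpolant_nonzero_in_hull) auto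
  ultimately show ?thesis
    unfolding unisolvent_ef_def by blast
qed

end

theorem theorem4:
  fixes v :: "nat \<Rightarrow> real^3"
    and \<omega> :: "nat \<Rightarrow> nat \<Rightarrow> real \<Rightarrow> real"
    and q :: "nat \<Rightarrow> nat \<Rightarrow> real poly"
  assumes nondeg: "inj_on v {1..4}" "\<not> affine_dependent (v ` {1..4})"
    and dens_nonneg: "\<And>i j t. 1 \<le> i \<Longrightarrow> i < j \<Longrightarrow> j \<le> 4 \<Longrightarrow> t \<in> {0..1} \<Longrightarrow> 0 \<le> \<omega> i j t"
    and dens_int: "\<And>i j. 1 \<le> i \<Longrightarrow> i < j \<Longrightarrow> j \<le> 4 \<Longrightarrow> (\<omega> i j has_integral 1) {0..1}"
    and q_deg: "\<And>i j. 1 \<le> i \<Longrightarrow> i < j \<Longrightarrow> j \<le> 4 \<Longrightarrow> degree (q i j) \<le> 2"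
    and q_orth: "\<And>i j a b. 1 \<le> i \<Longrightarrow> i < j \<Longrightarrow> j \<le> 4 \<Longrightarrow>
                   integral {0..1} (\<lambda>t. poly (q i j) t * (a + b * t) * \<omega> i j t) = 0"
  shows "unisolvent_ef v \<omega> q \<longleftrightarrow>
         (\<forall>i j. 1 \<le> i \<and> i < j \<and> j \<le> 4 \<longrightarrow>
            integral {0..1} (\<lambda>t. t * (1 - t) * poly (q i j) t * \<omega> i j t) \<noteq> 0)"
proof (rule tetrahedron_barycentric_coordinates[OF nondeg])
  fix lam :: "nat \<Rightarrow> real^3 \<Rightarrow> real" and D :: "nat \<Rightarrow> real" and E :: "nat \<Rightarrow> real^3"
  assume bary: "\<And>k y. lam k y = D k + E k \<bullet> y"
    "\<And>k m. k \<in> {1..4} \<Longrightarrow> m \<in> {1..4} \<Longrightarrow> lam k (v m) = (if k = m then 1 else 0)"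
    "\<And>y. (\<Sum>k\<in>{1..4}. lam k y) = 1" "\<And>y. (\<Sum>k\<in>{1..4}. lam k y *\<^sub>R v k) = y"
  interpret ef_tetrahedron v \<omega> q lam D E
  proof
    show "\<omega> i j integrable_on {0..1}" if "1 \<le> i" "i < j" "j \<le> 4" for i j
      using dens_int[OF that] by (rule has_integral_integrable)
  qed (fact bary dens_nonneg q_orth)+
  show ?thesis
  proof
    assume unisolvent: "unisolvent_ef v \<omega> q"
    show "\<forall>i j. 1 \<le> i \<and> i < j \<and> j \<le> 4 \<longrightarrow>
        integral {0..1} (\<lambda>t. t * (1 - t) * poly (q i j) t * \<omega> i j t) \<noteq> 0"
      using not_unisolvent_if_bubble_moment_zero unisolvent by (auto simp: bubble_moment_def)
  next
    assume "\<forall>i j. 1 \<le> i \<and> i < j \<and> j \<le> 4 \<longrightarrow>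
        integral {0..1} (\<lambda>t. t * (1 - t) * poly (q i j) t * \<omega> i j t) \<noteq> 0"
    then show "unisolvent_ef v \<omega> q"
      by (intro unisolvent_if_bubble_moments_nonzero) (simp add: bubble_moment_def)
  qed
qed

end
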